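(* Let $Y$ be a finite connected simple undirected graph and $e=\{v,w\}$ a cycle-edge of $Y$. If $O^1,O^2\in\mathsf{Acyc}(Y)$ are $\kappa$-equivalent and $v\leq_{O^1}w$ and $v\leq_{O^2}w$, then $\mathcal{I}(O^1)=\mathcal{I}(O^2)$; that is, the same vertices lie on directed paths from $v$ to $w$ in $O^1$ and in $O^2$, and the induced subdigraphs of $O^1$ and $O^2$ on this vertex set coincide. Hence $\mathcal{I}^*([O]):=\mathcal{I}(O^1)$ for any $O^1\in[O]$ with $\mathcal{I}(O^1)\neq\varnothing$ is a well-defined map on $\mathsf{Acyc}(Y)/\!\sim_\kappa$.
   Context: A cycle-edge is an edge whose removal does not increase the number of connected components. $\mathsf{Acyc}(Y)$ is the set of acyclic orientations; an acyclic orientation $O$ induces a partial order $\leq_O$ on vertices with $i\leq_O j$ iff there is a directed path from $i$ to $j$. $\mathcal{I}(O)$ is the interval $[v,w]=\{a: v\leq_O a\leq_O w\}$ (with the induced orientation) if $v\leq_O w$, and the empty graph otherwise. A click at a source $x$ reverses all edges incident to $x$; two acyclic orientations are $\kappa$-equivalent if one can be transformed into the other by a finite sequence of clicks; $[O]$ is the $\kappa$-class of $O$. *)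

theory Defs
  imports Main
begin

text \<open>A finite simple undirected graph Y = (V, E): E is a symmetric irreflexive
  relation on the vertex set V (each undirected edge {x,y} appears as (x,y) and (y,x)).\<close>
definition simple_graph :: "'a set \<Rightarrow> ('a \<times> 'a) set \<Rightarrow> bool" where
  "simple_graph V E \<longleftrightarrow> finite V \<and> E \<subseteq> V \<times> V \<and> sym E \<and> irrefl E"

definition connected_graph :: "'a set \<Rightarrow> ('a \<times> 'a) set \<Rightarrow> bool" where
  "connected_graph V E \<longleftrightarrow> V \<noteq> {} \<and> (\<forall>x\<in>V. \<forall>y\<in>V. (x, y) \<in> E\<^sup>*)"

definition num_components :: "'a set \<Rightarrow> ('a \<times> 'a) set \<Rightarrow> nat" where
  "num_components V E = card (V // {(x, y). x \<in> V \<and> y \<in> V \<and> (x, y) \<in> E\<^sup>*})"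

definition remove_edge :: "('a \<times> 'a) set \<Rightarrow> 'a \<Rightarrow> 'a \<Rightarrow> ('a \<times> 'a) set" where
  "remove_edge E v w = E - {(v, w), (w, v)}"

definition cycle_edge :: "'a set \<Rightarrow> ('a \<times> 'a) set \<Rightarrow> 'a \<Rightarrow> 'a \<Rightarrow> bool" where
  "cycle_edge V E v w \<longleftrightarrow> (v, w) \<in> E \<and>
     num_components V (remove_edge E v w) \<le> num_components V E"

definition orientation :: "('a \<times> 'a) set \<Rightarrow> ('a \<times> 'a) set \<Rightarrow> bool" where
  "orientation E Or \<longleftrightarrow> Or \<subseteq> E \<and> Or \<union> Or\<inverse> = E \<and> Or \<inter> Or\<inverse> = {}"

definition Acyc :: "('a \<times> 'a) set \<Rightarrow> ('a \<times> 'a) set set" where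
  "Acyc E = {Or. orientation E Or \<and> acyclic Or}"

definition leqO :: "('a \<times> 'a) set \<Rightarrow> 'a \<Rightarrow> 'a \<Rightarrow> bool" where
  "leqO Or i j \<longleftrightarrow> (i, j) \<in> Or\<^sup>*"

definition interval :: "('a \<times> 'a) set \<Rightarrow> 'a \<Rightarrow> 'a \<Rightarrow> 'a set \<times> ('a \<times> 'a) set" where
  "interval Or v w =
     (if leqO Or v w then
        (let A = {a. leqO Or v a \<and> leqO Or a w} in (A, Or \<inter> (A \<times> A)))
      else ({}, {}))"

definition is_source :: "'a set \<Rightarrow> ('a \<times> 'a) set \<Rightarrow> 'a \<Rightarrow> bool" where
  "is_source V Or x \<longleftrightarrow> x \<in> V \<and> (\<forall>y. (y, x) \<notin> Or)"

definition click :: "('a \<times> 'a) set \<Rightarrow> 'a \<Rightarrow> ('a \<times> 'a) set" where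
  "click Or x = {(a, b). (a, b) \<in> Or \<and> a \<noteq> x \<and> b \<noteq> x} \<union> {(b, a). (a, b) \<in> Or \<and> (a = x \<or> b = x)}"

definition click_step :: "'a set \<Rightarrow> ('a \<times> 'a) set \<Rightarrow> ('a \<times> 'a) set \<Rightarrow> ('a \<times> 'a) set \<Rightarrow> bool" where
  "click_step V E Or Or' \<longleftrightarrow> Or \<in> Acyc E \<and> (\<exists>x. is_source V Or x \<and> Or' = click Or x)"

definition kappa_equiv :: "'a set \<Rightarrow> ('a \<times> 'a) set \<Rightarrow> ('a \<times> 'a) set \<Rightarrow> ('a \<times> 'a) set \<Rightarrow> bool" where
  "kappa_equiv V E O1 O2 \<longleftrightarrow> (click_step V E)\<^sup>*\<^sup>* O1 O2"

end

theory Submission imports Defs begin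

text \<open>Along a cycle of Y, the number of edges that an orientation directs forwards is invariant
  under clicks: a click at a source x turns every arc leaving x into an arc entering x, and a closed
  walk leaves x exactly as often as it enters it. If (v, w) is an arc of both O1 and O2, a directed
  v-w walk of O1 closed up by the edge {w, v} is a cycle on which all edges but the closing one point
  forwards in O1; by the invariant the same holds in O2, so the walk is directed in O2 as well. Hence
  O1 and O2 have the same directed v-w walks, and the interval is the union of these walks.\<close>

definition cycle_arcs :: "'a list \<Rightarrow> ('a \<times> 'a) list" where
  "cycle_arcs cs = zip cs (rotate1 cs)"

definition forward_arcs :: "('a \<times> 'a) set \<Rightarrow> 'a list \<Rightarrow> nat" where
  "forward_arcs R cs = length (filter (\<lambda>a. a \<in> R) (cycle_arcs cs))"

lemma length_filter_balance:
  assumes "\<And>a. a \<in> set xs \<Longrightarrow>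
    of_bool (P a) + of_bool (Q a) = (of_bool (R a) + of_bool (S a) :: nat)"
  shows "length (filter P xs) + length (filter Q xs) = length (filter R xs) + length (filter S xs)"
  using assms
proof (induction xs)
  case (Cons a xs)
  have "length (filter P xs) + length (filter Q xs) = length (filter R xs) + length (filter S xs)"
    using Cons.prems by (intro Cons.IH) simp
  moreover have "of_bool (P a) + of_bool (Q a) = (of_bool (R a) + of_bool (S a) :: nat)"
    using Cons.prems by simp
  ultimately show ?case
    by (cases "P a"; cases "Q a"; cases "R a"; cases "S a") simp_all
qed simp

lemma cycle_arcs_out_eq_in:
  "length (filter (\<lambda>a. fst a = x) (cycle_arcs cs)) = length (filter (\<lambda>a. snd a = x) (cycle_arcs cs))"
proof -
  have "length (filter (\<lambda>a. fst a = x) (cycle_arcs cs)) = length (filter (\<lambda>c. c = x) cs)"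
    using length_filter_map[of "\<lambda>c. c = x" fst "cycle_arcs cs"] by (simp add: cycle_arcs_def comp_def)
  also have "\<dots> = length (filter (\<lambda>c. c = x) (rotate1 cs))"
    by (cases cs) auto
  also have "\<dots> = length (filter (\<lambda>a. snd a = x) (cycle_arcs cs))"
    using length_filter_map[of "\<lambda>c. c = x" snd "cycle_arcs cs"] by (simp add: cycle_arcs_def comp_def)
  finally show ?thesis .
qed

lemma click_iff:
  "is_source V P x \<Longrightarrow>
    (a, b) \<in> click P x \<longleftrightarrow> (if a = x \<or> b = x then (b, a) \<in> P else (a, b) \<in> P)"
  by (auto simp: click_def is_source_def)

lemma forward_arcs_click:
  assumes "orientation E P" and "is_source V P x" and "set (cycle_arcs cs) \<subseteq> E"
  shows "forward_arcs (click P x) cs = forward_arcs P cs"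
proof -
  have "of_bool (a \<in> click P x) + of_bool (fst a = x) = of_bool (a \<in> P) + (of_bool (snd a = x) :: nat)"
    if "a \<in> set (cycle_arcs cs)" for a
  proof -
    obtain a1 a2 where a: "a = (a1, a2)" by fastforce
    have "(a1, a2) \<in> P \<union> P\<inverse>" "(y, x) \<notin> P" for y
      using assms that a by (auto simp: orientation_def is_source_def)
    then show ?thesis
      using a click_iff[OF assms(2)] by auto
  qed
  then have "length (filter (\<lambda>a. a \<in> click P x) (cycle_arcs cs)) + length (filter (\<lambda>a. fst a = x) (cycle_arcs cs))
      = length (filter (\<lambda>a. a \<in> P) (cycle_arcs cs)) + length (filter (\<lambda>a. snd a = x) (cycle_arcs cs))"
    by (rule length_filter_balance)
  then show ?thesis
    using cycle_arcs_out_eq_in[of x cs] by (simp add: forward_arcs_def)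
qed

lemma forward_arcs_kappa_equiv:
  assumes "kappa_equiv V E P Q" and "set (cycle_arcs cs) \<subseteq> E"
  shows "forward_arcs Q cs = forward_arcs P cs"
  using assms(1) unfolding kappa_equiv_def
proof (induction rule: rtranclp_induct)
  case (step P' Q')
  then obtain x where "orientation E P'" "is_source V P' x" "Q' = click P' x"
    by (auto simp: click_step_def Acyc_def)
  with step.IH show ?case
    using forward_arcs_click assms(2) by metis
qed simp

definition walk_arcs :: "'a list \<Rightarrow> ('a \<times> 'a) list" where
  "walk_arcs p = zip p (tl p)"

definition is_walk :: "('a \<times> 'a) set \<Rightarrow> 'a \<Rightarrow> 'a \<Rightarrow> 'a list \<Rightarrow> bool" where
  "is_walk R x y p \<longleftrightarrow> p \<noteq> [] \<and> hd p = x \<and> last p = y \<and> set (walk_arcs p) \<subseteq> R"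

lemma walk_arcs_append:
  assumes "p \<noteq> []" and "q \<noteq> []" and "last p = hd q"
  shows "set (walk_arcs (p @ tl q)) = set (walk_arcs p) \<union> set (walk_arcs q)"
  using assms
proof (induction p)
  case (Cons a p)
  show ?case
  proof (cases p)
    case Nil
    with Cons.prems show ?thesis
      by (cases q) (auto simp: walk_arcs_def)
  next
    case (Cons b p')
    with Cons.IH Cons.prems show ?thesis
      by (auto simp: walk_arcs_def)
  qed
qed simp

lemma set_walk_arcs: "set (walk_arcs p) \<subseteq> set p \<times> set p"
  by (cases p) (auto simp: walk_arcs_def dest: set_zip_leftD set_zip_rightD)

lemma is_walk_append:
  "is_walk R x y p \<Longrightarrow> is_walk R y z q \<Longrightarrow> is_walk R x z (p @ tl q)"
  unfolding is_walk_def using walk_arcs_append[of p q]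
  by (cases q) auto

lemma is_walk_split:
  assumes "is_walk R x z (xs @ a # ys)"
  shows "is_walk R x a (xs @ [a])" and "is_walk R a z (a # ys)"
  using assms walk_arcs_append[of "xs @ [a]" "a # ys"]
  by (auto simp: is_walk_def hd_append)

lemma rtrancl_iff_walk: "(x, y) \<in> R\<^sup>* \<longleftrightarrow> (\<exists>p. is_walk R x y p)"
proof
  assume "(x, y) \<in> R\<^sup>*"
  then show "\<exists>p. is_walk R x y p"
  proof (induction rule: converse_rtrancl_induct)
    case base
    have "is_walk R y y [y]"
      by (simp add: is_walk_def walk_arcs_def)
    then show ?case ..
  next
    case (step x z)
    then obtain p where "is_walk R z y p"
      by blast
    with step.hyps have "is_walk R x y (x # p)"
      by (cases p) (auto simp: is_walk_def walk_arcs_def)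
    then show ?case ..
  qed
next
  assume "\<exists>p. is_walk R x y p"
  then obtain p where "is_walk R x y p" ..
  then show "(x, y) \<in> R\<^sup>*"
  proof (induction p arbitrary: x)
    case (Cons a p)
    then show ?case
      by (cases p) (auto simp: is_walk_def walk_arcs_def intro: converse_rtrancl_into_rtrancl)
  qed (simp add: is_walk_def)
qed

lemma on_walk_iff:
  "(\<exists>p. is_walk R v w p \<and> a \<in> set p) \<longleftrightarrow> (v, a) \<in> R\<^sup>* \<and> (a, w) \<in> R\<^sup>*"
proof
  assume "\<exists>p. is_walk R v w p \<and> a \<in> set p"
  then obtain xs ys where "is_walk R v w (xs @ a # ys)"
    by (metis split_list)
  then show "(v, a) \<in> R\<^sup>* \<and> (a, w) \<in> R\<^sup>*"
    using is_walk_split rtrancl_iff_walk by metis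
next
  assume "(v, a) \<in> R\<^sup>* \<and> (a, w) \<in> R\<^sup>*"
  then obtain p q where p: "is_walk R v a p" and q: "is_walk R a w q"
    using rtrancl_iff_walk by metis
  have "is_walk R v w (p @ tl q)"
    using p q by (rule is_walk_append)
  moreover have "a \<in> set (p @ tl q)"
    using p by (auto simp: is_walk_def)
  ultimately show "\<exists>p. is_walk R v w p \<and> a \<in> set p"
    by blast
qed

lemma arc_on_walk_iff:
  "(\<exists>p. is_walk R v w p \<and> (a, b) \<in> set (walk_arcs p)) \<longleftrightarrow>
    (a, b) \<in> R \<and> (v, a) \<in> R\<^sup>* \<and> (b, w) \<in> R\<^sup>*"
proof
  assume "\<exists>p. is_walk R v w p \<and> (a, b) \<in> set (walk_arcs p)"
  then obtain p where p: "is_walk R v w p" "(a, b) \<in> set (walk_arcs p)"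
    by blast
  then have "a \<in> set p" "b \<in> set p"
    using set_walk_arcs by blast+
  with p on_walk_iff[of R v w a] on_walk_iff[of R v w b]
  show "(a, b) \<in> R \<and> (v, a) \<in> R\<^sup>* \<and> (b, w) \<in> R\<^sup>*"
    by (auto simp: is_walk_def)
next
  assume ab: "(a, b) \<in> R \<and> (v, a) \<in> R\<^sup>* \<and> (b, w) \<in> R\<^sup>*"
  then obtain p q where p: "is_walk R v a p" and q: "is_walk R b w q"
    using rtrancl_iff_walk by metis
  have ab_walk: "is_walk R a b [a, b]"
    using ab by (simp add: is_walk_def walk_arcs_def)
  have "is_walk R v w (p @ tl ([a, b] @ tl q))"
    using is_walk_append[OF p is_walk_append[OF ab_walk q]] .
  moreover have "(a, b) \<in> set (walk_arcs (p @ tl ([a, b] @ tl q)))"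
    using p q walk_arcs_append[of "[a, b]" q] walk_arcs_append[of p "[a, b] @ tl q"]
    by (auto simp: is_walk_def walk_arcs_def)
  ultimately show "\<exists>p. is_walk R v w p \<and> (a, b) \<in> set (walk_arcs p)"
    by blast
qed

lemma zip_Cons_snoc:
  "zip (a # xs) (xs @ [b]) = zip (a # xs) xs @ [(last (a # xs), b)]"
  by (induction xs arbitrary: a) auto

lemma cycle_arcs_conv_walk_arcs:
  "p \<noteq> [] \<Longrightarrow> cycle_arcs p = walk_arcs p @ [(last p, hd p)]"
  by (cases p) (simp_all add: cycle_arcs_def walk_arcs_def zip_Cons_snoc)

lemma walk_transfer:
  assumes forward_eq: "\<And>cs. set (cycle_arcs cs) \<subseteq> E \<Longrightarrow> forward_arcs Q cs = forward_arcs P cs"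
    and "P \<subseteq> E" and "(w, v) \<in> E" and "(w, v) \<notin> P" and "(w, v) \<notin> Q"
    and walk: "is_walk P v w p"
  shows "is_walk Q v w p"
proof -
  have arcs: "cycle_arcs p = walk_arcs p @ [(w, v)]"
    using walk cycle_arcs_conv_walk_arcs by (auto simp: is_walk_def)
  have "set (cycle_arcs p) \<subseteq> E"
    using assms arcs by (auto simp: is_walk_def)
  then have "forward_arcs Q p = forward_arcs P p"
    by (rule forward_eq)
  then have "length (filter (\<lambda>a. a \<in> Q) (walk_arcs p)) = length (filter (\<lambda>a. a \<in> P) (walk_arcs p))"
    using assms(4,5) arcs by (simp add: forward_arcs_def)
  also have "\<dots> = length (walk_arcs p)"
    using walk by (simp add: is_walk_def filter_id_conv subset_code(1))
  finally have "set (walk_arcs p) \<subseteq> Q"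
    by (metis filter_id_conv length_filter_less less_irrefl subsetI)
  with walk show ?thesis
    by (simp add: is_walk_def)
qed

lemma interval_conv_walks:
  assumes "leqO R v w"
  shows "interval R v w =
    ((\<Union>p\<in>{p. is_walk R v w p}. set p), (\<Union>p\<in>{p. is_walk R v w p}. set (walk_arcs p)))"
proof -
  define A where "A = {a. leqO R v a \<and> leqO R a w}"
  have A: "A = (\<Union>p\<in>{p. is_walk R v w p}. set p)"
    using on_walk_iff[of R v w] unfolding A_def leqO_def by blast
  have "(a, b) \<in> R \<inter> A \<times> A \<longleftrightarrow> (a, b) \<in> R \<and> (v, a) \<in> R\<^sup>* \<and> (b, w) \<in> R\<^sup>*" for a b
    unfolding A_def leqO_def by (blast intro: rtrancl_into_rtrancl converse_rtrancl_into_rtrancl)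
  then have "(a, b) \<in> R \<inter> A \<times> A \<longleftrightarrow> (\<exists>p. is_walk R v w p \<and> (a, b) \<in> set (walk_arcs p))" for a b
    using arc_on_walk_iff by metis
  then have "R \<inter> A \<times> A = (\<Union>p\<in>{p. is_walk R v w p}. set (walk_arcs p))"
    by auto
  with A assms show ?thesis
    by (simp add: interval_def A_def)
qed

lemma orientation_arc_if_reachable:
  assumes "orientation E R" and "acyclic R" and "(v, w) \<in> E" and "(v, w) \<in> R\<^sup>*"
  shows "(v, w) \<in> R"
proof (rule ccontr)
  assume "(v, w) \<notin> R"
  then have "(w, v) \<in> R"
    using assms(1,3) by (auto simp: orientation_def)
  with assms(4) have "(w, w) \<in> R\<^sup>+"
    by (meson rtrancl_into_trancl2)
  with assms(2) show False
    by (simp add: acyclic_def)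
qed

theorem proposition5:
  fixes V :: "'a set" and E :: "('a \<times> 'a) set" and v w :: 'a
    and O1 O2 :: "('a \<times> 'a) set"
  assumes "simple_graph V E"
    and "connected_graph V E"
    and "cycle_edge V E v w"
    and "O1 \<in> Acyc E" and "O2 \<in> Acyc E"
    and "kappa_equiv V E O1 O2"
    and "leqO O1 v w" and "leqO O2 v w"
  shows "interval O1 v w = interval O2 v w"
proof -
  have vw: "(v, w) \<in> E" and wv: "(w, v) \<in> E"
    using assms(1,3) by (auto simp: cycle_edge_def simple_graph_def dest: symD)
  have O1: "orientation E O1" "acyclic O1" and O2: "orientation E O2" "acyclic O2"
    using assms(4,5) by (auto simp: Acyc_def)
  have "(v, w) \<in> O1" "(v, w) \<in> O2"
    using orientation_arc_if_reachable O1 O2 vw assms(7,8) by (auto simp: leqO_def)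
  then have not_wv: "(w, v) \<notin> O1" "(w, v) \<notin> O2"
    using O1 O2 by (auto simp: orientation_def)
  have sub: "O1 \<subseteq> E" "O2 \<subseteq> E"
    using O1 O2 by (auto simp: orientation_def)
  note forward_eq = forward_arcs_kappa_equiv[OF assms(6)]
  have "{p. is_walk O1 v w p} = {p. is_walk O2 v w p}"
    using walk_transfer[OF forward_eq sub(1) wv not_wv]
      walk_transfer[OF forward_eq[symmetric] sub(2) wv not_wv(2,1)] by blast
  then show ?thesis
    unfolding interval_conv_walks[OF assms(7)] interval_conv_walks[OF assms(8)] by simp
qed

end
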